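(* Let $1\le m<n$, let $\mathbf{b}\in\{0,1\}^{n-m}$ with $\mathbf{b}\neq\mathbf{0}_{n-m}$, let $y\in\mathbb{Q}[t]$, and let $c,c'$ be elements of multi-degree $\mathbf{W}\in\mathbb{N}^m$ of $\mathcal{L}^{\mathbb{Q}}_{T^m}(\mathbb{Q}[t];\mathbb{Q})$. If $c\sim c'$ in $\mathrm{Tot}(\mathcal{L}^{\mathbb{Q}}_{T^m}(\mathbb{Q}[t];\mathbb{Q}))$, then \[c_{(-,\mathbf{0}_{n-m})}\otimes y_{(\mathbf{0}_m,\mathbf{b})}\sim c'_{(-,\mathbf{0}_{n-m})}\otimes y_{(\mathbf{0}_m,\mathbf{b})}\] in multi-degree $(\mathbf{W},\mathbf{1}_{n-m})$ of $\mathrm{Tot}(\mathcal{L}^{\mathbb{Q}}_{T^n}(\mathbb{Q}[t];\mathbb{Q}))$.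
   Context: The $n$-chain complex $\mathcal{L}^{\mathbb{Q}}_{T^n}(\mathbb{Q}[t];\mathbb{Q})$: in multi-degree $\mathbf{V}\in\mathbb{N}^n$, elements are sums of multi-matrices of size $(v_1+1)\times\cdots\times(v_n+1)$ with entries in $\mathbb{Q}[t]$ at coordinates $\mathbf{v}\ne\mathbf{0}_n$ ($\mathbf{0}\le\mathbf{v}\le\mathbf{V}$) and in $\mathbb{Q}$ at $\mathbf{0}_n$ (tensors over $\mathbb{Q}$; $\mathbb{Q}$ a $\mathbb{Q}[t]$-module via $t\mapsto0$). In direction $i$ the slices are indexed by $j\in\{0,\dots,v_i\}$; $d_{i,j}$ ($j<v_i$) multiplies slices $j$ and $j+1$ entrywise and $d_{i,v_i}$ multiplies slice $v_i$ into slice $0$; $\mathrm{d}_i=\sum_j(-1)^jd_{i,j}$, and the total differential is $\mathrm{d}=\sum_i(-1)^{v_1+\cdots+v_{i-1}}\mathrm{d}_i$. $\sim$ means differing by a boundary in the total complex. For a multi-matrix $c$ in multi-degree $\mathbf{W}$ with entries $c_{\mathbf{a}}$, $c_{(-,\mathbf{0})}\otimes y_{(\mathbf{0},\mathbf{b})}$ is the multi-matrix in multi-degree $(\mathbf{W},\mathbf{1}_{n-m})$ with $c_{\mathbf{a}}$ at $(\mathbf{a},\mathbf{0}_{n-m})$, $y$ at $(\mathbf{0}_m,\mathbf{b})$, $1$ elsewhere, extended linearly to sums. *)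

theory Defs
  imports "HOL-Computational_Algebra.Polynomial"
begin

text \<open>Model of the n-chain complex L^Q_{T^n}(Q[t];Q).
  The tensor product (over Q) of copies of Q[t] indexed by the non-origin grid
  points, tensored with Q at the origin, is identified with the polynomial ring
  in one variable t_v per non-origin grid point v.  A monomial is an exponent
  function on grid points; a chain is a finitely supported coefficient function
  on monomials.\<close>

type_synonym mono = "nat list \<Rightarrow> nat"
type_synonym chain = "mono \<Rightarrow> rat"

definition grid_pt :: "nat \<Rightarrow> nat list \<Rightarrow> nat list \<Rightarrow> bool" where
  "grid_pt n V v \<longleftrightarrow> length v = n \<and> length V = n \<and> (\<forall>k<n. v ! k \<le> V ! k)
      \<and> v \<noteq> replicate n 0"

definition valid_chain :: "nat \<Rightarrow> nat list \<Rightarrow> chain \<Rightarrow> bool" where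
  "valid_chain n V p \<longleftrightarrow> finite {M. p M \<noteq> 0} \<and>
     (\<forall>M. p M \<noteq> 0 \<longrightarrow> (\<forall>v. M v \<noteq> 0 \<longrightarrow> grid_pt n V v))"

definition coface :: "nat list \<Rightarrow> nat \<Rightarrow> nat \<Rightarrow> nat list \<Rightarrow> nat list" where
  "coface V i j v = v[i := (let x = v ! i in
      if j < V ! i then (if x \<le> j then x else x - 1)
      else (if x = V ! i then 0 else x))]"

text \<open>Image of a monomial under the multiplication map induced by phi;
  None means the monomial is killed (a variable lands at the origin, t maps to 0).\<close>
definition push :: "(nat list \<Rightarrow> nat list) \<Rightarrow> nat \<Rightarrow> mono \<Rightarrow> mono option" where
  "push \<phi> n M = (if \<exists>v. M v \<noteq> 0 \<and> \<phi> v = replicate n 0 then None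
      else Some (\<lambda>w. \<Sum>v\<in>{v. M v \<noteq> 0 \<and> \<phi> v = w}. M v))"

definition face :: "nat \<Rightarrow> nat list \<Rightarrow> nat \<Rightarrow> nat \<Rightarrow> chain \<Rightarrow> chain" where
  "face n V i j p = (\<lambda>M'. \<Sum>M\<in>{M. p M \<noteq> 0 \<and> push (coface V i j) n M = Some M'}. p M)"

definition dir :: "nat \<Rightarrow> nat list \<Rightarrow> nat \<Rightarrow> chain \<Rightarrow> chain" where
  "dir n V i p = (\<lambda>M. \<Sum>j\<le>V ! i. (-1) ^ j * face n V i j p M)"

definition Dtot :: "nat \<Rightarrow> (nat list \<Rightarrow> chain) \<Rightarrow> nat list \<Rightarrow> chain" where
  "Dtot n X U = (\<lambda>M. \<Sum>i<n. (-1) ^ sum_list (take i U) *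
      dir n (U[i := Suc (U ! i)]) i (X (U[i := Suc (U ! i)])) M)"

definition tot_chain :: "nat \<Rightarrow> nat \<Rightarrow> (nat list \<Rightarrow> chain) \<Rightarrow> bool" where
  "tot_chain n k X \<longleftrightarrow> (\<forall>U. valid_chain n U (X U)) \<and>
     (\<forall>U. X U \<noteq> (\<lambda>M. 0) \<longrightarrow> length U = n \<and> sum_list U = k)"

definition homologous :: "nat \<Rightarrow> nat list \<Rightarrow> chain \<Rightarrow> chain \<Rightarrow> bool" where
  "homologous n W c c' \<longleftrightarrow> (\<exists>X. tot_chain n (sum_list W + 1) X \<and>
     (\<forall>U. length U = n \<longrightarrow>
        Dtot n X U = (if U = W then (\<lambda>M. c M - c' M) else (\<lambda>M. 0))))"

definition tensor_ext :: "nat \<Rightarrow> nat \<Rightarrow> nat list \<Rightarrow> rat poly \<Rightarrow> chain \<Rightarrow> chain" where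
  "tensor_ext m n b y c = (\<lambda>M.
     if (\<forall>v. M v \<noteq> 0 \<longrightarrow> (\<exists>a. length a = m \<and> v = a @ replicate (n - m) 0)
                          \<or> v = replicate m 0 @ b)
     then c (\<lambda>a. if length a = m then M (a @ replicate (n - m) 0) else 0)
          * coeff y (M (replicate m 0 @ b))
     else 0)"

end

theory Submission
  imports Defs
begin

text \<open>Let \<open>X\<close> be a chain of \<open>Tot\<close> of the \<open>m\<close>-complex whose boundary is \<open>c - c'\<close>. Lift it by
  placing \<open>X U \<otimes> y_(0,b)\<close> in multi-degree \<open>(U, 1_{n-m})\<close> and \<open>0\<close> in all other degrees.
  For \<open>i < m\<close> the face maps \<open>d_{i,j}\<close> preserve the slice of grid points \<open>(a, 0)\<close>, act on it as in
  the \<open>m\<close>-complex, and fix the point \<open>(0, b)\<close>, which is not killed because \<open>b \<noteq> 0\<close>; so \<open>d_i\<close>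
  commutes with the lift. For \<open>i \<ge> m\<close> the \<open>i\<close>-th part of the total differential of the lift
  vanishes: the source degree has entry \<open>1\<close> in direction \<open>i\<close>, where \<open>d_{i,0} = d_{i,1}\<close> cancel,
  or an entry \<open>\<ge> 2\<close>, where the lift is \<open>0\<close>. Hence the boundary of the lift is the lift
  of \<open>c - c'\<close>.\<close>

lemma length_coface [simp]: "length (coface V i j v) = length v"
  by (simp add: coface_def)

lemma coface_append:
  assumes "length a = length V" and "i < length V"
  shows "coface (V @ U) i j (a @ u) = coface V i j a @ u"
  using assms by (simp add: coface_def Let_def nth_append list_update_append)

lemma coface_eq_self_if_nth_zero: "v ! i = 0 \<Longrightarrow> coface V i j v = v"
  by (simp add: coface_def Let_def) (metis list_update_id)

lemma push_cong:
  assumes "\<And>v. M v \<noteq> 0 \<Longrightarrow> \<phi> v = \<psi> v"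
  shows "push \<phi> n M = push \<psi> n M"
proof -
  have "{v. M v \<noteq> 0 \<and> \<phi> v = w} = {v. M v \<noteq> 0 \<and> \<psi> v = w}" for w
    using assms by auto
  moreover have "(\<exists>v. M v \<noteq> 0 \<and> \<phi> v = w) \<longleftrightarrow> (\<exists>v. M v \<noteq> 0 \<and> \<psi> v = w)" for w
    using assms by auto
  ultimately show ?thesis
    unfolding push_def by simp
qed

lemma dir_eq_zero_if_degree_one:
  assumes "valid_chain n V p" and "i < n" and "V ! i = 1"
  shows "dir n V i p = (\<lambda>M. 0)"
proof -
  have "push (coface V i 0) n M = push (coface V i 1) n M" if "p M \<noteq> 0" for M
  proof (rule push_cong)
    fix v
    assume "M v \<noteq> 0"
    with assms(1) \<open>p M \<noteq> 0\<close> have "grid_pt n V v"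
      unfolding valid_chain_def by blast
    with assms(2,3) have "v ! i \<le> 1"
      unfolding grid_pt_def by auto
    with assms(3) show "coface V i 0 v = coface V i 1 v"
      by (cases "v ! i") (auto simp: coface_def Let_def)
  qed
  then have "face n V i 0 p = face n V i 1 p"
    unfolding face_def by (intro ext sum.cong) auto
  with assms(3) show ?thesis
    by (simp add: dir_def fun_eq_iff)
qed

lemma dir_zero [simp]: "dir n V i (\<lambda>M. 0) = (\<lambda>M. 0)"
  by (simp add: dir_def face_def)

definition mono_of_length :: "nat \<Rightarrow> mono \<Rightarrow> bool" where
  "mono_of_length k R \<longleftrightarrow> (\<forall>a. R a \<noteq> 0 \<longrightarrow> length a = k)"

lemma valid_chain_mono_of_length: "valid_chain k V p \<Longrightarrow> p R \<noteq> 0 \<Longrightarrow> mono_of_length k R"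
  unfolding valid_chain_def grid_pt_def mono_of_length_def by blast

lemma push_mono_of_length:
  assumes "push \<phi> k R = Some R'" and "mono_of_length m R" and "\<And>a. length (\<phi> a) = length a"
  shows "mono_of_length m R'"
  unfolding mono_of_length_def
proof (intro allI impI)
  fix w
  assume "R' w \<noteq> 0"
  moreover from assms(1) have "R' w = (\<Sum>v | R v \<noteq> 0 \<and> \<phi> v = w. R v)"
    by (auto simp: push_def split: if_splits)
  ultimately have "{v. R v \<noteq> 0 \<and> \<phi> v = w} \<noteq> {}"
    by (metis sum.empty)
  then obtain v where "R v \<noteq> 0" and "\<phi> v = w"
    by blast
  with assms(2,3) show "length w = m"
    unfolding mono_of_length_def by metis
qed

locale tensor_embedding =
  fixes m n :: nat and b :: "nat list" and y :: "rat poly"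
  assumes m_less_n: "m < n"
    and length_b: "length b = n - m"
    and b_nonzero: "b \<noteq> replicate (n - m) 0"
    and b_01: "set b \<subseteq> {0, 1}"
begin

abbreviation zeros :: "nat list" where
  "zeros \<equiv> replicate (n - m) 0"

text \<open>Written with \<open>Suc 0\<close>, the simp normal form of \<open>1 :: nat\<close>, so that rewrite rules
  mentioning \<open>ones\<close> still match after simplification.\<close>
abbreviation ones :: "nat list" where
  "ones \<equiv> replicate (n - m) (Suc 0)"

definition y_point :: "nat list" where
  "y_point = replicate m 0 @ b"

text \<open>The monomials that can occur in \<open>c_(-,0) \<otimes> y_(0,b)\<close>; they correspond bijectively
  to pairs of a monomial \<open>R\<close> of the \<open>m\<close>-complex and an exponent \<open>k\<close> of \<open>y\<close>,
  via \<open>slice_part\<close> and \<open>lift_mono\<close>.\<close>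
definition on_slice :: "mono \<Rightarrow> bool" where
  "on_slice M \<longleftrightarrow> (\<forall>v. M v \<noteq> 0 \<longrightarrow> (\<exists>a. length a = m \<and> v = a @ zeros) \<or> v = y_point)"

definition slice_part :: "mono \<Rightarrow> mono" where
  "slice_part M = (\<lambda>a. if length a = m then M (a @ zeros) else 0)"

definition lift_mono :: "mono \<Rightarrow> nat \<Rightarrow> mono" where
  "lift_mono R k = (\<lambda>v. if v = y_point then k
     else if length v = n \<and> drop m v = zeros then R (take m v) else 0)"

lemma tensor_ext_eq:
  "tensor_ext m n b y p M = (if on_slice M then p (slice_part M) * coeff y (M y_point) else 0)"
  unfolding tensor_ext_def on_slice_def slice_part_def y_point_def by simp

lemma length_y_point: "length y_point = n"
  using length_b m_less_n by (simp add: y_point_def)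

lemma replicate_zero_split: "replicate n 0 = replicate m 0 @ zeros"
  using m_less_n by (metis le_add_diff_inverse less_imp_le replicate_add)

lemma y_point_nonzero: "y_point \<noteq> replicate n 0"
  using b_nonzero by (simp add: y_point_def replicate_zero_split)

lemma append_zeros_ne_y_point: "length a = m \<Longrightarrow> a @ zeros \<noteq> y_point"
  using b_nonzero by (simp add: y_point_def)

lemma nth_y_point: "i < m \<Longrightarrow> y_point ! i = 0"
  by (simp add: y_point_def nth_append)

lemma lift_mono_y_point [simp]: "lift_mono R k y_point = k"
  by (simp add: lift_mono_def)

lemma lift_mono_append_zeros [simp]: "length a = m \<Longrightarrow> lift_mono R k (a @ zeros) = R a"
  using append_zeros_ne_y_point m_less_n by (simp add: lift_mono_def)

lemma lift_mono_nonzero_cases: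
  assumes "lift_mono R k v \<noteq> 0"
  obtains "v = y_point" | a where "length a = m" and "v = a @ zeros" and "R a \<noteq> 0"
proof (cases "v = y_point")
  case False
  with assms have "length v = n" and "drop m v = zeros" and "R (take m v) \<noteq> 0"
    by (auto simp: lift_mono_def split: if_splits)
  with m_less_n show ?thesis
    by (metis append_take_drop_id length_take min.absorb4 that(2))
qed

lemma on_slice_lift_mono: "on_slice (lift_mono R k)"
  unfolding on_slice_def by (metis lift_mono_nonzero_cases)

lemma lift_mono_slice_part:
  assumes "on_slice M"
  shows "lift_mono (slice_part M) (M y_point) = M"
proof
  fix v
  show "lift_mono (slice_part M) (M y_point) v = M v"
  proof (cases "v = y_point \<or> (length v = n \<and> drop m v = zeros)")
    case True
    with m_less_n show ?thesis
      by (auto simp: lift_mono_def slice_part_def) (metis append_take_drop_id)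
  next
    case False
    have "M v = 0"
    proof (rule ccontr)
      assume "M v \<noteq> 0"
      with assms False obtain a where "length a = m" and "v = a @ zeros"
        unfolding on_slice_def by blast
      with False m_less_n show False
        by simp
    qed
    with False show ?thesis
      by (auto simp: lift_mono_def)
  qed
qed

lemma slice_part_lift_mono: "mono_of_length m R \<Longrightarrow> slice_part (lift_mono R k) = R"
  by (auto simp: slice_part_def mono_of_length_def fun_eq_iff)

lemma append_zeros_eq_iff:
  "length u = m \<and> u @ zeros = w \<longleftrightarrow> length w = n \<and> drop m w = zeros \<and> u = take m w"
proof
  assume "length u = m \<and> u @ zeros = w"
  with m_less_n show "length w = n \<and> drop m w = zeros \<and> u = take m w"
    by auto
next
  assume w: "length w = n \<and> drop m w = zeros \<and> u = take m w"
  with m_less_n have "length u = m"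
    by simp
  with w show "length u = m \<and> u @ zeros = w"
    by (metis append_take_drop_id)
qed

context
  fixes \<phi> \<psi> :: "nat list \<Rightarrow> nat list"
  assumes \<phi>_y_point: "\<phi> y_point = y_point"
    and \<phi>_append_zeros: "\<And>a. length a = m \<Longrightarrow> \<phi> (a @ zeros) = \<psi> a @ zeros"
    and length_\<psi>: "\<And>a. length (\<psi> a) = length a"
begin

lemma lift_mono_killed_iff:
  "(\<exists>v. lift_mono R k v \<noteq> 0 \<and> \<phi> v = replicate n 0) \<longleftrightarrow> (\<exists>a. R a \<noteq> 0 \<and> \<psi> a = replicate m 0)"
proof
  assume "\<exists>v. lift_mono R k v \<noteq> 0 \<and> \<phi> v = replicate n 0"
  then obtain v where "lift_mono R k v \<noteq> 0" and \<phi>_v: "\<phi> v = replicate n 0"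
    by blast
  then show "\<exists>a. R a \<noteq> 0 \<and> \<psi> a = replicate m 0"
  proof (cases rule: lift_mono_nonzero_cases)
    case 1
    with \<phi>_v \<phi>_y_point y_point_nonzero show ?thesis
      by simp
  next
    case (2 a)
    with \<phi>_v \<phi>_append_zeros show ?thesis
      by (metis append_same_eq replicate_zero_split)
  qed
next
  assume "\<exists>a. R a \<noteq> 0 \<and> \<psi> a = replicate m 0"
  then obtain a where "R a \<noteq> 0" and \<psi>_a: "\<psi> a = replicate m 0"
    by blast
  moreover from \<psi>_a length_\<psi> have "length a = m"
    by (metis length_replicate)
  ultimately show "\<exists>v. lift_mono R k v \<noteq> 0 \<and> \<phi> v = replicate n 0"
    using \<phi>_append_zeros replicate_zero_split by (intro exI[of _ "a @ zeros"]) simp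
qed

lemma fibre_lift_mono_y_point:
  "{v. lift_mono R k v \<noteq> 0 \<and> \<phi> v = y_point} = {v. v = y_point \<and> k \<noteq> 0}"
proof (intro set_eqI iffI)
  fix v
  assume v: "v \<in> {v. lift_mono R k v \<noteq> 0 \<and> \<phi> v = y_point}"
  then have "lift_mono R k v \<noteq> 0"
    by blast
  then have "v = y_point"
  proof (cases rule: lift_mono_nonzero_cases)
    case (2 a)
    with v \<phi>_append_zeros length_\<psi> append_zeros_ne_y_point show ?thesis
      by auto
  qed
  with v show "v \<in> {v. v = y_point \<and> k \<noteq> 0}"
    by simp
qed (use \<phi>_y_point in simp)

lemma fibre_lift_mono:
  assumes "w \<noteq> y_point"
  shows "{v. lift_mono R k v \<noteq> 0 \<and> \<phi> v = w}
    = (\<lambda>a. a @ zeros) ` {a. length a = m \<and> R a \<noteq> 0 \<and> \<psi> a @ zeros = w}"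
proof (intro set_eqI iffI)
  fix v
  assume v: "v \<in> {v. lift_mono R k v \<noteq> 0 \<and> \<phi> v = w}"
  then have "lift_mono R k v \<noteq> 0"
    by blast
  then show "v \<in> (\<lambda>a. a @ zeros) ` {a. length a = m \<and> R a \<noteq> 0 \<and> \<psi> a @ zeros = w}"
  proof (cases rule: lift_mono_nonzero_cases)
    case 1
    with v assms \<phi>_y_point show ?thesis
      by simp
  next
    case (2 a)
    with v \<phi>_append_zeros show ?thesis
      by auto
  qed
next
  fix v
  assume "v \<in> (\<lambda>a. a @ zeros) ` {a. length a = m \<and> R a \<noteq> 0 \<and> \<psi> a @ zeros = w}"
  then obtain a where "length a = m" and "R a \<noteq> 0" and "\<psi> a @ zeros = w" and "v = a @ zeros"
    by blast
  with \<phi>_append_zeros show "v \<in> {v. lift_mono R k v \<noteq> 0 \<and> \<phi> v = w}"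
    by simp
qed

lemma fibre_sum_lift_mono:
  "(\<Sum>v | lift_mono R k v \<noteq> 0 \<and> \<phi> v = w. lift_mono R k v)
    = lift_mono (\<lambda>w'. \<Sum>a | R a \<noteq> 0 \<and> \<psi> a = w'. R a) k w"
proof (cases "w = y_point")
  case True
  then show ?thesis
    unfolding True fibre_lift_mono_y_point by (cases "k = 0") simp_all
next
  case False
  let ?A = "{a. length a = m \<and> R a \<noteq> 0 \<and> \<psi> a @ zeros = w}"
  have "inj_on (\<lambda>a. a @ zeros) ?A"
    by (simp add: inj_on_def)
  then have "(\<Sum>v | lift_mono R k v \<noteq> 0 \<and> \<phi> v = w. lift_mono R k v) = (\<Sum>a\<in>?A. R a)"
    unfolding fibre_lift_mono[OF False] by (simp add: sum.reindex)
  moreover have "?A = (if length w = n \<and> drop m w = zeros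
      then {a. R a \<noteq> 0 \<and> \<psi> a = take m w} else {})"
    using append_zeros_eq_iff[of "\<psi> _" w] length_\<psi> by auto
  ultimately show ?thesis
    using False by (simp add: lift_mono_def)
qed

lemma push_lift_mono:
  "push \<phi> n (lift_mono R k) = map_option (\<lambda>R'. lift_mono R' k) (push \<psi> m R)"
  using lift_mono_killed_iff fibre_sum_lift_mono by (simp add: push_def fun_eq_iff)

end

lemma tensor_ext_lincomb:
  "tensor_ext m n b y (\<lambda>M. \<Sum>i\<in>A. s i * f i M) M = (\<Sum>i\<in>A. s i * tensor_ext m n b y (f i) M)"
  by (simp add: tensor_ext_eq sum_distrib_right mult.assoc)

lemma tensor_ext_diff:
  "tensor_ext m n b y (\<lambda>M. c M - c' M) = (\<lambda>M. tensor_ext m n b y c M - tensor_ext m n b y c' M)"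
  by (simp add: tensor_ext_eq algebra_simps fun_eq_iff)

lemma tensor_ext_zero [simp]: "tensor_ext m n b y (\<lambda>M. 0) = (\<lambda>M. 0)"
  by (simp add: tensor_ext_eq fun_eq_iff)

lemma mono_of_length_slice_part: "mono_of_length m (slice_part M)"
  by (simp add: mono_of_length_def slice_part_def)

lemma push_coface_eq_Some_iff:
  assumes "length V = m" and "i < m" and "on_slice M"
  shows "push (coface (V @ ones) i j) n M = Some M' \<longleftrightarrow>
    on_slice M' \<and> M' y_point = M y_point \<and> push (coface V i j) m (slice_part M) = Some (slice_part M')"
proof -
  have "push (coface (V @ ones) i j) n M
      = map_option (\<lambda>R'. lift_mono R' (M y_point)) (push (coface V i j) m (slice_part M))"
  proof (subst lift_mono_slice_part[OF assms(3), symmetric], rule push_lift_mono)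
    show "coface (V @ ones) i j y_point = y_point"
      using assms(2) by (simp add: coface_eq_self_if_nth_zero nth_y_point)
  qed (use assms(1,2) coface_append in auto)
  moreover have "slice_part (lift_mono R' k) = R'"
    if "push (coface V i j) m (slice_part M) = Some R'" for R' k
    using that mono_of_length_slice_part by (simp add: push_mono_of_length slice_part_lift_mono)
  ultimately show ?thesis
    by (auto simp: on_slice_lift_mono) (metis lift_mono_slice_part)
qed

lemma face_fibre_tensor_ext_iff:
  assumes "length V = m" and "i < m"
  shows "tensor_ext m n b y p M \<noteq> 0 \<and> push (coface (V @ ones) i j) n M = Some M' \<longleftrightarrow>
    on_slice M \<and> p (slice_part M) \<noteq> 0 \<and> coeff y (M' y_point) \<noteq> 0 \<and> on_slice M' \<and>
    M y_point = M' y_point \<and> push (coface V i j) m (slice_part M) = Some (slice_part M')"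
  using push_coface_eq_Some_iff[OF assms] by (auto simp: tensor_ext_eq)

lemma face_fibre_tensor_ext:
  assumes valid: "valid_chain m V p" and "length V = m" and "i < m"
    and "on_slice M'" and "coeff y (M' y_point) \<noteq> 0"
  shows "{M. tensor_ext m n b y p M \<noteq> 0 \<and> push (coface (V @ ones) i j) n M = Some M'}
    = (\<lambda>R. lift_mono R (M' y_point)) ` {R. p R \<noteq> 0 \<and> push (coface V i j) m R = Some (slice_part M')}"
    (is "?S = (\<lambda>R. lift_mono R ?k) ` ?T")
proof (intro set_eqI iffI)
  fix M
  assume "M \<in> ?S"
  with face_fibre_tensor_ext_iff[OF assms(2,3)]
  have "on_slice M" and "M y_point = ?k" and "slice_part M \<in> ?T"
    by auto
  from lift_mono_slice_part[OF \<open>on_slice M\<close>] \<open>M y_point = ?k\<close>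
  have "lift_mono (slice_part M) ?k = M"
    by (simp only:)
  with \<open>slice_part M \<in> ?T\<close> show "M \<in> (\<lambda>R. lift_mono R ?k) ` ?T"
    by (blast intro: image_eqI[OF sym])
next
  fix M
  assume "M \<in> (\<lambda>R. lift_mono R ?k) ` ?T"
  then obtain R where "R \<in> ?T" and "M = lift_mono R ?k"
    by blast
  moreover from \<open>R \<in> ?T\<close> valid have "mono_of_length m R"
    by (blast intro: valid_chain_mono_of_length)
  ultimately show "M \<in> ?S"
    using assms(4,5) unfolding face_fibre_tensor_ext_iff[OF assms(2,3)]
    by (simp add: on_slice_lift_mono slice_part_lift_mono)
qed

lemma face_tensor_ext:
  assumes valid: "valid_chain m V p" and "length V = m" and "i < m"
  shows "face n (V @ ones) i j (tensor_ext m n b y p) = tensor_ext m n b y (face m V i j p)"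
proof
  fix M' :: mono
  let ?P = "tensor_ext m n b y p" and ?k = "M' y_point"
  let ?S = "{M. ?P M \<noteq> 0 \<and> push (coface (V @ ones) i j) n M = Some M'}"
  let ?T = "{R. p R \<noteq> 0 \<and> push (coface V i j) m R = Some (slice_part M')}"
  have lhs: "face n (V @ ones) i j ?P M' = (\<Sum>M\<in>?S. ?P M)"
    unfolding face_def ..
  have rhs: "tensor_ext m n b y (face m V i j p) M'
      = (if on_slice M' then (\<Sum>R\<in>?T. p R) * coeff y ?k else 0)"
    unfolding tensor_ext_eq face_def ..
  show "face n (V @ ones) i j ?P M' = tensor_ext m n b y (face m V i j p) M'"
  proof (cases "on_slice M' \<and> coeff y ?k \<noteq> 0")
    case True
    have lengths: "mono_of_length m R" if "R \<in> ?T" for R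
      using that valid_chain_mono_of_length[OF valid] by blast
    have "inj_on (\<lambda>R. lift_mono R ?k) ?T"
      by (rule inj_on_inverseI[where g = slice_part]) (simp add: slice_part_lift_mono lengths)
    then have "(\<Sum>M\<in>?S. ?P M) = (\<Sum>R\<in>?T. ?P (lift_mono R ?k))"
      using True by (simp add: face_fibre_tensor_ext[OF assms] sum.reindex)
    also have "\<dots> = (\<Sum>R\<in>?T. p R) * coeff y ?k"
      unfolding sum_distrib_right
      by (rule sum.cong) (simp_all add: tensor_ext_eq on_slice_lift_mono slice_part_lift_mono lengths)
    finally show ?thesis
      using True lhs rhs by simp
  next
    case False
    then have S_empty: "?S = {}"
      unfolding face_fibre_tensor_ext_iff[OF assms(2,3)] by blast
    show ?thesis
      unfolding lhs rhs S_empty using False by simp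
  qed
qed

lemma dir_tensor_ext:
  assumes "valid_chain m V p" and "length V = m" and "i < m"
  shows "dir n (V @ ones) i (tensor_ext m n b y p) = tensor_ext m n b y (dir m V i p)"
proof -
  from assms(2,3) have "(V @ ones) ! i = V ! i"
    by (simp add: nth_append)
  then show ?thesis
    unfolding dir_def face_tensor_ext[OF assms] by (simp add: tensor_ext_lincomb fun_eq_iff)
qed

lemma grid_pt_y_point:
  assumes "length U = m"
  shows "grid_pt n (U @ ones) y_point"
proof -
  have "y_point ! k \<le> (U @ ones) ! k" if "k < n" for k
  proof (cases "k < m")
    case False
    with that length_b have "b ! (k - m) \<in> set b"
      by simp
    with b_01 have "b ! (k - m) \<le> 1"
      by auto
    with False that assms show ?thesis
      by (simp add: y_point_def nth_append)
  qed (simp add: nth_y_point)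
  with assms m_less_n length_y_point y_point_nonzero show ?thesis
    by (simp add: grid_pt_def)
qed

lemma grid_pt_append_zeros: "grid_pt m U a \<Longrightarrow> grid_pt n (U @ ones) (a @ zeros)"
  using m_less_n replicate_zero_split by (auto simp: grid_pt_def nth_append)

lemma valid_chain_tensor_ext:
  assumes valid: "valid_chain m U p" and "length U = m"
  shows "valid_chain n (U @ ones) (tensor_ext m n b y p)"
  unfolding valid_chain_def
proof (intro conjI allI impI)
  let ?P = "tensor_ext m n b y p"
  have "{M. ?P M \<noteq> 0} \<subseteq> (\<lambda>(R, k). lift_mono R k) ` ({R. p R \<noteq> 0} \<times> {k. coeff y k \<noteq> 0})"
  proof
    fix M
    assume "M \<in> {M. ?P M \<noteq> 0}"
    then have "on_slice M" and "p (slice_part M) \<noteq> 0" and "coeff y (M y_point) \<noteq> 0"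
      by (auto simp: tensor_ext_eq split: if_splits)
    then show "M \<in> (\<lambda>(R, k). lift_mono R k) ` ({R. p R \<noteq> 0} \<times> {k. coeff y k \<noteq> 0})"
      by (intro image_eqI[of _ _ "(slice_part M, M y_point)"]) (auto simp: lift_mono_slice_part)
  qed
  moreover have "finite {R. p R \<noteq> 0}"
    using valid unfolding valid_chain_def by blast
  moreover have "finite {k. coeff y k \<noteq> 0}"
    by (rule finite_subset[of _ "{..degree y}"]) (auto intro: le_degree)
  ultimately show "finite {M. ?P M \<noteq> 0}"
    by (meson finite_SigmaI finite_imageI finite_subset)
next
  fix M v
  assume "tensor_ext m n b y p M \<noteq> 0" and "M v \<noteq> 0"
  then have p_nonzero: "p (slice_part M) \<noteq> 0" and "lift_mono (slice_part M) (M y_point) v \<noteq> 0"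
    by (auto simp: tensor_ext_eq lift_mono_slice_part split: if_splits)
  from this(2) show "grid_pt n (U @ ones) v"
  proof (cases rule: lift_mono_nonzero_cases)
    case 1
    with assms(2) grid_pt_y_point show ?thesis
      by simp
  next
    case (2 a)
    with valid p_nonzero have "grid_pt m U a"
      unfolding valid_chain_def slice_part_def by auto
    with 2 grid_pt_append_zeros show ?thesis
      by simp
  qed
qed

definition tensor_tot :: "(nat list \<Rightarrow> chain) \<Rightarrow> nat list \<Rightarrow> chain" where
  "tensor_tot X U' = (if length U' = n \<and> drop m U' = ones
     then tensor_ext m n b y (X (take m U')) else (\<lambda>M. 0))"

lemma tensor_tot_append_ones: "length U = m \<Longrightarrow> tensor_tot X (U @ ones) = tensor_ext m n b y (X U)"
  using m_less_n by (simp add: tensor_tot_def)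

lemma append_ones_cases:
  assumes "length U' = n" and "drop m U' = ones"
  obtains U where "length U = m" and "U' = U @ ones"
proof -
  from assms(2) have "U' = take m U' @ ones"
    by (metis append_take_drop_id)
  moreover from assms(1) m_less_n have "length (take m U') = m"
    by simp
  ultimately show ?thesis
    using that by blast
qed

lemma valid_chain_tensor_tot:
  assumes "\<And>U. valid_chain m U (X U)"
  shows "valid_chain n U' (tensor_tot X U')"
proof (cases "length U' = n \<and> drop m U' = ones")
  case True
  then have "length U' = n" and "drop m U' = ones"
    by simp_all
  then obtain U where "length U = m" and "U' = U @ ones"
    by (rule append_ones_cases)
  with assms show ?thesis
    by (simp add: tensor_tot_append_ones valid_chain_tensor_ext)
next
  case False
  then have "tensor_tot X U' = (\<lambda>M. 0)"
    unfolding tensor_tot_def by (rule if_not_P)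
  then show ?thesis
    by (simp add: valid_chain_def)
qed

lemma tot_chain_tensor_tot:
  assumes "tot_chain m k X"
  shows "tot_chain n (k + (n - m)) (tensor_tot X)"
proof -
  have "length U' = n \<and> sum_list U' = k + (n - m)" if nonzero: "tensor_tot X U' \<noteq> (\<lambda>M. 0)" for U'
  proof -
    from nonzero have "length U' = n" and "drop m U' = ones"
      by (auto simp: tensor_tot_def split: if_splits)
    then obtain U where "length U = m" and U': "U' = U @ ones"
      by (rule append_ones_cases)
    with nonzero have "X U \<noteq> (\<lambda>M. 0)"
      by (metis tensor_ext_zero tensor_tot_append_ones)
    with assms have "sum_list U = k"
      unfolding tot_chain_def by blast
    with \<open>length U' = n\<close> U' show ?thesis
      by (simp add: sum_list_replicate)
  qed
  moreover have "valid_chain n U' (tensor_tot X U')" for U'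
    using assms valid_chain_tensor_tot unfolding tot_chain_def by blast
  ultimately show ?thesis
    unfolding tot_chain_def by blast
qed

lemma dir_tensor_tot_outer_eq_zero:
  assumes valid: "\<And>U. valid_chain m U (X U)"
    and "length U' = n" and "m \<le> i" and "i < n"
  shows "dir n (U'[i := Suc (U' ! i)]) i (tensor_tot X (U'[i := Suc (U' ! i)])) = (\<lambda>M. 0)"
proof (cases "U' ! i = 0")
  case True
  with assms(2,4) show ?thesis
    by (intro dir_eq_zero_if_degree_one valid_chain_tensor_tot valid) simp_all
next
  case False
  from assms(2-4) have "drop m (U'[i := Suc (U' ! i)]) ! (i - m) = Suc (U' ! i)"
    by simp
  moreover from assms(3,4) have "ones ! (i - m) = 1"
    by simp
  ultimately have "drop m (U'[i := Suc (U' ! i)]) \<noteq> ones"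
    using False by auto
  then show ?thesis
    by (simp add: tensor_tot_def)
qed

lemma Dtot_tensor_tot_eq_inner_sum:
  assumes "\<And>U. valid_chain m U (X U)" and "length U' = n"
  shows "Dtot n (tensor_tot X) U' = (\<lambda>M. \<Sum>i<m. (-1) ^ sum_list (take i U') *
      dir n (U'[i := Suc (U' ! i)]) i (tensor_tot X (U'[i := Suc (U' ! i)])) M)"
proof -
  have "{..<n} = {..<m} \<union> {m..<n}" and "{..<m} \<inter> {m..<n} = {}"
    using m_less_n by auto
  with dir_tensor_tot_outer_eq_zero[OF assms] show ?thesis
    unfolding Dtot_def by (simp add: sum.union_disjoint fun_eq_iff)
qed

lemma Dtot_tensor_tot:
  assumes valid: "\<And>U. valid_chain m U (X U)" and "length U = m"
  shows "Dtot n (tensor_tot X) (U @ ones) = tensor_ext m n b y (Dtot m X U)"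
proof -
  have "dir n ((U @ ones)[i := Suc ((U @ ones) ! i)]) i (tensor_tot X ((U @ ones)[i := Suc ((U @ ones) ! i)]))
      = tensor_ext m n b y (dir m (U[i := Suc (U ! i)]) i (X (U[i := Suc (U ! i)])))"
    if "i < m" for i
  proof -
    from that assms(2) have "(U @ ones)[i := Suc ((U @ ones) ! i)] = U[i := Suc (U ! i)] @ ones"
      by (simp add: list_update_append nth_append)
    moreover have "tensor_tot X (U[i := Suc (U ! i)] @ ones) = tensor_ext m n b y (X (U[i := Suc (U ! i)]))"
      by (rule tensor_tot_append_ones) (simp add: assms(2))
    moreover have "dir n (U[i := Suc (U ! i)] @ ones) i (tensor_ext m n b y (X (U[i := Suc (U ! i)])))
        = tensor_ext m n b y (dir m (U[i := Suc (U ! i)]) i (X (U[i := Suc (U ! i)])))"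
      by (rule dir_tensor_ext) (simp_all add: valid assms(2) that)
    ultimately show ?thesis
      by (simp only:)
  qed
  moreover have "take i (U @ ones) = take i U" if "i < m" for i
    using that assms(2) by simp
  ultimately have "Dtot n (tensor_tot X) (U @ ones) = (\<lambda>M. \<Sum>i<m. (-1) ^ sum_list (take i U) *
      tensor_ext m n b y (dir m (U[i := Suc (U ! i)]) i (X (U[i := Suc (U ! i)]))) M)"
    using assms(2) m_less_n by (simp add: Dtot_tensor_tot_eq_inner_sum[OF valid])
  also have "\<dots> = tensor_ext m n b y (Dtot m X U)"
    by (simp add: Dtot_def tensor_ext_lincomb fun_eq_iff)
  finally show ?thesis .
qed

lemma Dtot_tensor_tot_off_slice:
  assumes valid: "\<And>U. valid_chain m U (X U)" and "length U' = n" and "drop m U' \<noteq> ones"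
  shows "Dtot n (tensor_tot X) U' = (\<lambda>M. 0)"
proof -
  from assms(3) have "tensor_tot X (U'[i := Suc (U' ! i)]) = (\<lambda>M. 0)" if "i < m" for i
    using that by (simp add: tensor_tot_def)
  then show ?thesis
    by (simp add: Dtot_tensor_tot_eq_inner_sum[OF assms(1,2)])
qed

lemma Dtot_tensor_tot_eq:
  assumes valid: "\<And>U. valid_chain m U (X U)" and "length U' = n"
  shows "Dtot n (tensor_tot X) U' = tensor_tot (Dtot m X) U'"
proof (cases "drop m U' = ones")
  case True
  with assms(2) obtain U where "length U = m" and "U' = U @ ones"
    by (rule append_ones_cases)
  then show ?thesis
    by (simp add: Dtot_tensor_tot[OF valid] tensor_tot_append_ones)
next
  case False
  with assms show ?thesis
    by (simp add: Dtot_tensor_tot_off_slice tensor_tot_def)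
qed

lemma tensor_tot_concentrated:
  assumes "\<And>U. length U = m \<Longrightarrow> Y U = (if U = W then Z else (\<lambda>M. 0))" and "length W = m"
  shows "tensor_tot Y U' = (if U' = W @ ones then tensor_ext m n b y Z else (\<lambda>M. 0))"
proof (cases "length U' = n \<and> drop m U' = ones")
  case True
  then have "length U' = n" and "drop m U' = ones"
    by simp_all
  then obtain U where "length U = m" and "U' = U @ ones"
    by (rule append_ones_cases)
  with assms show ?thesis
    by (simp add: tensor_tot_append_ones)
next
  case False
  with assms(2) m_less_n show ?thesis
    by (auto simp: tensor_tot_def)
qed

end

theorem lemma4p8:
  fixes m n :: nat and b W :: "nat list" and y :: "rat poly" and c c' :: chain
  assumes "1 \<le> m" and "m < n"
    and "length b = n - m" and "set b \<subseteq> {0, 1}" and "b \<noteq> replicate (n - m) 0"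
    and "length W = m"
    and "valid_chain m W c" and "valid_chain m W c'"
    and "homologous m W c c'"
  shows "homologous n (W @ replicate (n - m) 1) (tensor_ext m n b y c) (tensor_ext m n b y c')"
proof -
  interpret tensor_embedding m n b y
    using assms(2-5) by unfold_locales
  from assms(9) obtain X where X: "tot_chain m (sum_list W + 1) X"
    and DX: "\<And>U. length U = m \<Longrightarrow> Dtot m X U = (if U = W then (\<lambda>M. c M - c' M) else (\<lambda>M. 0))"
    unfolding homologous_def by blast
  then have valid: "\<And>U. valid_chain m U (X U)"
    unfolding tot_chain_def by blast
  have "tot_chain n (sum_list (W @ ones) + 1) (tensor_tot X)"
    using tot_chain_tensor_tot[OF X] by (simp add: sum_list_replicate)
  moreover have "Dtot n (tensor_tot X) U' = (if U' = W @ ones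
      then (\<lambda>M. tensor_ext m n b y c M - tensor_ext m n b y c' M) else (\<lambda>M. 0))"
    if "length U' = n" for U'
    using Dtot_tensor_tot_eq[OF valid that] tensor_tot_concentrated[OF DX assms(6)]
    by (simp add: tensor_ext_diff)
  ultimately show ?thesis
    unfolding homologous_def One_nat_def by blast
qed

end
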